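(* Let $(b,c)$ be a weighted graph over $V$ with $n(x)>0$ for all $x\in V$, and let $Q=Q_{b,c,n}$ be the associated form on $\ell^2(V,n)$. Then for all $u\in D(Q)$ $$\Big(1-\sqrt{1-\alpha_{b,c,n}^2}\Big)\|u\|_n^2\le Q(u)\le\Big(1+\sqrt{1-\alpha_{b,c,n}^2}\Big)\|u\|_n^2,$$ where $\alpha_{b,c,n}=\alpha_{b,c,n}(V)$.
   Context: Let $V$ be a countably infinite set. A weighted graph over $V$ is a pair $(b,c)$ of maps $b:V\times V\to[0,\infty)$ and $c:V\to[0,\infty)$ with $b(x,x)=0$, $b(x,y)=b(y,x)$ and $\sum_{y\in V}b(x,y)<\infty$ for all $x,y\in V$. Let $n(x)=\sum_y b(x,y)+c(x)$ and $\|u\|_n^2=\sum_x n(x)u(x)^2$. Define $Q^{\max}(u)=\frac12\sum_{x,y}b(x,y)(u(x)-u(y))^2+\sum_x c(x)u(x)^2$; $Q_{b,c,n}$ is the closure in $\ell^2(V,n)$ of the restriction of $Q^{\max}$ to finitely supported functions. For finite $W$ let $|\partial W|=\sum_{x\in W,y\notin W}b(x,y)+\sum_{x\in W}c(x)$, $n(W)=\sum_{x\in W}n(x)$, and $\alpha_{b,c,n}(U)=\inf\{|\partial W|/n(W):\ W\subseteq U\text{ finite, nonempty}\}$. *)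

theory Defs
  imports "HOL-Analysis.Analysis"
begin

definition weighted_graph :: "('v \<Rightarrow> 'v \<Rightarrow> real) \<Rightarrow> ('v \<Rightarrow> real) \<Rightarrow> bool" where
  "weighted_graph b c \<longleftrightarrow>
     (\<forall>x y. b x y \<ge> 0) \<and> (\<forall>x. c x \<ge> 0) \<and> (\<forall>x. b x x = 0) \<and>
     (\<forall>x y. b x y = b y x) \<and> (\<forall>x. (b x) summable_on UNIV)"

definition nweight :: "('v \<Rightarrow> 'v \<Rightarrow> real) \<Rightarrow> ('v \<Rightarrow> real) \<Rightarrow> 'v \<Rightarrow> real" where
  "nweight b c x = (\<Sum>\<^sub>\<infinity>y. b x y) + c x"

definition in_l2 :: "('v \<Rightarrow> real) \<Rightarrow> ('v \<Rightarrow> real) \<Rightarrow> bool" where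
  "in_l2 m u \<longleftrightarrow> (\<lambda>x. m x * (u x)\<^sup>2) summable_on UNIV"

definition norm2 :: "('v \<Rightarrow> real) \<Rightarrow> ('v \<Rightarrow> real) \<Rightarrow> real" where
  "norm2 m u = (\<Sum>\<^sub>\<infinity>x. m x * (u x)\<^sup>2)"

definition Qmax :: "('v \<Rightarrow> 'v \<Rightarrow> real) \<Rightarrow> ('v \<Rightarrow> real) \<Rightarrow> ('v \<Rightarrow> real) \<Rightarrow> real" where
  "Qmax b c u = (1/2) * (\<Sum>\<^sub>\<infinity>(x,y). b x y * (u x - u y)\<^sup>2) + (\<Sum>\<^sub>\<infinity>x. c x * (u x)\<^sup>2)"

definition fin_supp :: "('v \<Rightarrow> real) \<Rightarrow> bool" where
  "fin_supp u \<longleftrightarrow> finite {x. u x \<noteq> 0}"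

text \<open>f is an approximating sequence for u for the closure of Qmax restricted to
  finitely supported functions: finitely supported, converging to u in l^2(V,n),
  and Cauchy with respect to Qmax.\<close>
definition approx_seq :: "('v \<Rightarrow> 'v \<Rightarrow> real) \<Rightarrow> ('v \<Rightarrow> real) \<Rightarrow> (nat \<Rightarrow> 'v \<Rightarrow> real) \<Rightarrow> ('v \<Rightarrow> real) \<Rightarrow> bool" where
  "approx_seq b c f u \<longleftrightarrow>
     (\<forall>k. fin_supp (f k)) \<and> in_l2 (nweight b c) u \<and>
     (\<lambda>k. norm2 (nweight b c) (\<lambda>x. f k x - u x)) \<longlonglongrightarrow> 0 \<and>
     (\<forall>e>0. \<exists>N. \<forall>k\<ge>N. \<forall>j\<ge>N. Qmax b c (\<lambda>x. f k x - f j x) < e)"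

definition form_domain :: "('v \<Rightarrow> 'v \<Rightarrow> real) \<Rightarrow> ('v \<Rightarrow> real) \<Rightarrow> ('v \<Rightarrow> real) set" where
  "form_domain b c = {u. \<exists>f. approx_seq b c f u}"

definition Qform :: "('v \<Rightarrow> 'v \<Rightarrow> real) \<Rightarrow> ('v \<Rightarrow> real) \<Rightarrow> ('v \<Rightarrow> real) \<Rightarrow> real" where
  "Qform b c u = (THE q. \<exists>f. approx_seq b c f u \<and> (\<lambda>k. Qmax b c (f k)) \<longlonglongrightarrow> q)"

definition boundary :: "('v \<Rightarrow> 'v \<Rightarrow> real) \<Rightarrow> ('v \<Rightarrow> real) \<Rightarrow> 'v set \<Rightarrow> real" where
  "boundary b c W = (\<Sum>x\<in>W. \<Sum>\<^sub>\<infinity>y\<in>-W. b x y) + (\<Sum>x\<in>W. c x)"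

definition alpha :: "('v \<Rightarrow> 'v \<Rightarrow> real) \<Rightarrow> ('v \<Rightarrow> real) \<Rightarrow> 'v set \<Rightarrow> real" where
  "alpha b c U = Inf {boundary b c W / (\<Sum>x\<in>W. nweight b c x) | W. W \<subseteq> U \<and> finite W \<and> W \<noteq> {}}"

end

theory Submission
  imports Defs
begin

(* On a finite set S, a co-area argument
      (induction on the number of positive values of g = f^2) turns the isoperimetric
      inequality alpha * n(W) <= |dW| into alpha * N <= X + Y, where N = sum n f^2,
      Y = sum c f^2 and X = 1/2 sum b |f(x)^2 - f(y)^2|.  Cauchy-Schwarz gives
      X^2 <= P * R for P, R = 1/2 sum b (f x -+ f y)^2, and P + R + 2 Y = 2 N.
      Elementary algebra then yields |Q - N| <= sqrt (1 - alpha^2) * N for Q = P + Y.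
   2. A finitely supported f on the graph is reduced to step 1 on its support S: the
      edges leaving S are folded into the killing term c x + b(x, V - S).
   3. Closure.  Both Qmax and the norm of l^2(V,n) are weighted sums of squares (the former
      over edges, of the gradient); the inequality (a+b)^2 <= (1+t) a^2 + (1+1/t) b^2 and
      Fatou's lemma show that along an approximating sequence f_k -> u we have
      Qmax(f_k) -> Qmax(u) and ||f_k|| -> ||u||; in particular Q(u) = Qmax(u).
   4. The theorem follows from step 2 for the f_k by passing to the limit. *)


(* Young's inequality for squares; it makes weighted sums of squares quasi-subadditive. *)
lemma square_add_le:
  fixes a b t :: real
  assumes "0 < t"
  shows "(a + b)^2 \<le> (1 + t) * a^2 + (1 + 1/t) * b^2"
proof -
  have "(1 + t) * a^2 + (1 + 1/t) * b^2 - (a + b)^2 = (t * a - b)^2 / t"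
    using assms by (simp add: field_simps power2_eq_square)
  moreover have "0 \<le> (t * a - b)^2 / t"
    using assms by simp
  ultimately show ?thesis
    by linarith
qed

lemma cheeger_algebra:
  fixes N P R X Y \<alpha> :: real
  assumes nonneg: "0 \<le> X" "0 \<le> Y" "0 \<le> P" "0 \<le> R"
    and \<alpha>: "0 \<le> \<alpha>" "\<alpha> \<le> 1"
    and coarea: "\<alpha> * N \<le> X + Y"
    and cauchy_schwarz: "X^2 \<le> P * R"
    and parallelogram: "P + R + 2 * Y = 2 * N"
  shows "\<bar>P + Y - N\<bar> \<le> sqrt (1 - \<alpha>^2) * N"
proof -
  have N: "0 \<le> N"
    using nonneg parallelogram by linarith
  have "(P + R)^2 - (2 * X)^2 = (P - R)^2 + 4 * (P * R) - 4 * X^2"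
    by (simp add: power2_eq_square algebra_simps)
  then have "(2 * X)^2 \<le> (P + R)^2"
    using cauchy_schwarz zero_le_power2[of "P - R"] by linarith
  then have "2 * X \<le> P + R"
    by (rule power2_le_imp_le) (use nonneg in simp)
  then have "2 * X * Y \<le> (P + R) * Y"
    using nonneg(2) by (rule mult_right_mono)
  moreover have "(P + Y) * (R + Y) - (X + Y)^2 = P * R - X^2 + ((P + R) * Y - 2 * X * Y)"
    by (simp add: power2_eq_square algebra_simps)
  ultimately have "(X + Y)^2 \<le> (P + Y) * (R + Y)"
    using cauchy_schwarz by linarith
  moreover have "(\<alpha> * N)^2 \<le> (X + Y)^2"
    using coarea \<alpha> N by (intro power_mono) simp_all
  moreover have "(P + Y - N)^2 = N^2 - (P + Y) * (2 * N - (P + Y))"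
    by (simp add: power2_eq_square algebra_simps)
  moreover have "(1 - \<alpha>^2) * N^2 = N^2 - (\<alpha> * N)^2"
    by (simp add: power2_eq_square algebra_simps)
  ultimately have "(P + Y - N)^2 \<le> (1 - \<alpha>^2) * N^2"
    using parallelogram by (smt (verit))
  also have "\<dots> = (sqrt (1 - \<alpha>^2) * N)^2"
    using \<alpha> by (simp add: power_mult_distrib power_le_one)
  finally have "\<bar>P + Y - N\<bar>^2 \<le> (sqrt (1 - \<alpha>^2) * N)^2"
    by simp
  then show ?thesis
    by (rule power2_le_imp_le) (use \<alpha> N in \<open>simp add: power_le_one\<close>)
qed


subsection \<open>Weighted sums of squares\<close>

(* Throughout, in_l2 m and norm2 m are used for arbitrary nonnegative weights m on an
   arbitrary index type: on vertices for the norm of l^2(V,n), on edges for the energy. *)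

lemma norm2_nonneg:
  assumes "\<And>x. 0 \<le> m x"
  shows "0 \<le> norm2 m g"
  unfolding norm2_def using assms by (intro infsum_nonneg) simp

lemma l2_uminus [simp]:
  "in_l2 m (\<lambda>x. - g x) \<longleftrightarrow> in_l2 m g"
  "norm2 m (\<lambda>x. - g x) = norm2 m g"
  unfolding in_l2_def norm2_def by simp_all

lemma in_l2_add:
  assumes m: "\<And>x. 0 \<le> m x" and g: "in_l2 m g" and h: "in_l2 m h"
  shows "in_l2 m (\<lambda>x. g x + h x)"
proof -
  have dominating: "(\<lambda>x. 2 * (m x * (g x)^2) + 2 * (m x * (h x)^2)) summable_on UNIV"
    using g h unfolding in_l2_def by (intro summable_on_add summable_on_cmult_right)
  have "m x * (g x + h x)^2 \<le> 2 * (m x * (g x)^2) + 2 * (m x * (h x)^2)" for x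
    using mult_left_mono[OF square_add_le[of 1 "g x" "h x"] m[of x]]
    by (simp add: algebra_simps)
  then show ?thesis
    unfolding in_l2_def using m by (intro summable_on_comparison_test[OF dominating]) simp_all
qed

lemma norm2_add_le:
  assumes m: "\<And>x. 0 \<le> m x" and g: "in_l2 m g" and h: "in_l2 m h" and t: "0 < t"
  shows "norm2 m (\<lambda>x. g x + h x) \<le> (1 + t) * norm2 m g + (1 + 1/t) * norm2 m h"
proof -
  have sg: "(\<lambda>x. m x * (g x)^2) summable_on UNIV" and sh: "(\<lambda>x. m x * (h x)^2) summable_on UNIV"
    using g h unfolding in_l2_def by simp_all
  have "norm2 m (\<lambda>x. g x + h x)
      \<le> (\<Sum>\<^sub>\<infinity>x. (1 + t) * (m x * (g x)^2) + (1 + 1/t) * (m x * (h x)^2))"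
    unfolding norm2_def
  proof (rule infsum_mono)
    show "(\<lambda>x. m x * (g x + h x)^2) summable_on UNIV"
      using in_l2_add[OF m g h] unfolding in_l2_def .
    show "(\<lambda>x. (1 + t) * (m x * (g x)^2) + (1 + 1/t) * (m x * (h x)^2)) summable_on UNIV"
      by (intro summable_on_add summable_on_cmult_right sg sh)
    show "m x * (g x + h x)^2 \<le> (1 + t) * (m x * (g x)^2) + (1 + 1/t) * (m x * (h x)^2)" for x
      using mult_left_mono[OF square_add_le[OF t, of "g x" "h x"] m[of x]]
      by (simp add: algebra_simps)
  qed
  also have "\<dots> = (1 + t) * norm2 m g + (1 + 1/t) * norm2 m h"
    unfolding norm2_def
    by (simp add: infsum_add summable_on_cmult_right sg sh infsum_cmult_right')
  finally show ?thesis .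
qed

lemma l2_finite_support:
  assumes "finite S" and "\<And>x. x \<notin> S \<Longrightarrow> g x = 0"
  shows "in_l2 m g" and "norm2 m g = (\<Sum>x\<in>S. m x * (g x)^2)"
proof -
  have "((\<lambda>x. m x * (g x)^2) has_sum (\<Sum>x\<in>S. m x * (g x)^2)) UNIV"
    by (rule has_sum_finite_neutralI) (use assms in auto)
  then show "in_l2 m g" and "norm2 m g = (\<Sum>x\<in>S. m x * (g x)^2)"
    unfolding in_l2_def norm2_def by (simp_all add: has_sum_iff)
qed

(* A single term is dominated by the whole sum; convergence in norm thus implies pointwise
   convergence when all weights are positive. *)
lemma norm2_ge_term:
  assumes "\<And>x. 0 \<le> m x" and "in_l2 m g"
  shows "m x * (g x)^2 \<le> norm2 m g"
  using finite_sum_le_infsum[of "\<lambda>x. m x * (g x)^2" UNIV "{x}"] assms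
  unfolding in_l2_def norm2_def by simp

lemma l2_fatou:
  assumes m: "\<And>x. 0 \<le> m x" and h: "\<And>j. in_l2 m (h j)"
    and lim: "\<And>x. (\<lambda>j. h j x) \<longlonglongrightarrow> g x"
    and bound: "\<And>j. N \<le> j \<Longrightarrow> norm2 m (h j) \<le> e"
  shows "in_l2 m g" and "norm2 m g \<le> e"
proof -
  have partial: "(\<Sum>x\<in>F. m x * (g x)^2) \<le> e" if "finite F" for F
  proof (rule LIMSEQ_le_const2)
    show "(\<lambda>j. \<Sum>x\<in>F. m x * (h j x)^2) \<longlonglongrightarrow> (\<Sum>x\<in>F. m x * (g x)^2)"
      by (intro tendsto_sum tendsto_mult tendsto_const tendsto_power lim)
    show "\<exists>N. \<forall>j\<ge>N. (\<Sum>x\<in>F. m x * (h j x)^2) \<le> e"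
    proof (intro exI allI impI)
      fix j assume "N \<le> j"
      have "(\<Sum>x\<in>F. m x * (h j x)^2) \<le> norm2 m (h j)"
        unfolding norm2_def using h[of j] m \<open>finite F\<close>
        by (intro finite_sum_le_infsum) (simp_all add: in_l2_def)
      also have "\<dots> \<le> e"
        using bound \<open>N \<le> j\<close> .
      finally show "(\<Sum>x\<in>F. m x * (h j x)^2) \<le> e" .
    qed
  qed
  show summable: "in_l2 m g"
    unfolding in_l2_def
    by (rule nonneg_bdd_above_summable_on) (use m partial in \<open>auto intro!: bdd_aboveI2\<close>)
  show "norm2 m g \<le> e"
    unfolding norm2_def
    by (rule infsum_le_finite_sums) (use summable partial in \<open>simp_all add: in_l2_def\<close>)
qed


subsection \<open>The Cheeger estimate on a finite set\<close>

lemma sum_cut_pairs: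
  fixes f :: "'v \<Rightarrow> 'v \<Rightarrow> real"
  assumes "finite S" and "P \<subseteq> S"
  shows "(\<Sum>x\<in>S. \<Sum>y\<in>S. if x \<in> P \<and> y \<notin> P then f x y else 0) = (\<Sum>x\<in>P. \<Sum>y\<in>S - P. f x y)"
proof -
  have "(\<Sum>y\<in>S. if x \<in> P \<and> y \<notin> P then f x y else 0) = (if x \<in> P then \<Sum>y\<in>S - P. f x y else 0)" for x
    using sum.inter_restrict[OF assms(1), of "f x" "-P"] by (simp add: Diff_eq)
  then show ?thesis
    using sum.inter_restrict[OF assms(1), of "\<lambda>x. \<Sum>y\<in>S - P. f x y" P] assms(2)
    by (simp add: Int_absorb1)
qed

lemma sum_sym_swap:
  assumes "\<And>x y. b x y = b y x"
  shows "(\<Sum>x\<in>S. \<Sum>y\<in>S. b x y * h y x) = (\<Sum>x\<in>S. \<Sum>y\<in>S. b x y * h x y)"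
  using sum.swap[of "\<lambda>x y. b x y * h y x" S S] by (simp add: assms)

lemma layer_split:
  fixes b :: "'v \<Rightarrow> 'v \<Rightarrow> real" and g g' h :: "'v \<Rightarrow> real"
  assumes S: "finite S" and P: "P \<subseteq> S"
    and g: "\<And>x. x \<in> S \<Longrightarrow> g x = (if x \<in> P then m else 0) + g' x"
    and layer: "\<And>x y. x \<in> S \<Longrightarrow> y \<in> S \<Longrightarrow>
      max (g x - g y) 0 = (if x \<in> P \<and> y \<notin> P then m else 0) + max (g' x - g' y) 0"
  shows "(\<Sum>x\<in>S. \<Sum>y\<in>S. b x y * max (g x - g y) 0)
      = m * (\<Sum>x\<in>P. \<Sum>y\<in>S - P. b x y) + (\<Sum>x\<in>S. \<Sum>y\<in>S. b x y * max (g' x - g' y) 0)"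
    and "(\<Sum>x\<in>S. h x * g x) = m * (\<Sum>x\<in>P. h x) + (\<Sum>x\<in>S. h x * g' x)"
proof -
  have "(\<Sum>x\<in>S. \<Sum>y\<in>S. b x y * max (g x - g y) 0)
    = (\<Sum>x\<in>S. \<Sum>y\<in>S. (if x \<in> P \<and> y \<notin> P then m * b x y else 0) + b x y * max (g' x - g' y) 0)"
    by (intro sum.cong refl) (simp add: layer algebra_simps)
  also have "\<dots> = (\<Sum>x\<in>S. \<Sum>y\<in>S. (if x \<in> P \<and> y \<notin> P then m * b x y else 0))
      + (\<Sum>x\<in>S. \<Sum>y\<in>S. b x y * max (g' x - g' y) 0)"
    by (simp add: sum.distrib)
  finally show "(\<Sum>x\<in>S. \<Sum>y\<in>S. b x y * max (g x - g y) 0)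
      = m * (\<Sum>x\<in>P. \<Sum>y\<in>S - P. b x y) + (\<Sum>x\<in>S. \<Sum>y\<in>S. b x y * max (g' x - g' y) 0)"
    using sum_cut_pairs[OF S P, of "\<lambda>x y. m * b x y"] by (simp add: sum_distrib_left)
  have "(\<Sum>x\<in>S. h x * g x) = (\<Sum>x\<in>S. (if x \<in> P then m * h x else 0) + h x * g' x)"
    by (intro sum.cong refl) (simp add: g algebra_simps)
  also have "\<dots> = m * (\<Sum>x\<in>P. h x) + (\<Sum>x\<in>S. h x * g' x)"
    using S P by (simp add: sum.distrib sum.inter_restrict[symmetric] Int_absorb1 sum_distrib_left)
  finally show "(\<Sum>x\<in>S. h x * g x) = m * (\<Sum>x\<in>P. h x) + (\<Sum>x\<in>S. h x * g' x)" .
qed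

(* Induction on the number of points where g > 0,
   removing the bottom layer m * 1_P, where P = {g > 0} and m is the least value on P. *)
lemma coarea_inequality:
  fixes b :: "'v \<Rightarrow> 'v \<Rightarrow> real" and n k g :: "'v \<Rightarrow> real"
  assumes S: "finite S" and b: "\<And>x y. 0 \<le> b x y"
    and isoperimetric: "\<And>W. W \<subseteq> S \<Longrightarrow>
      \<alpha> * (\<Sum>x\<in>W. n x) \<le> (\<Sum>x\<in>W. \<Sum>y\<in>S - W. b x y) + (\<Sum>x\<in>W. k x)"
    and g: "\<And>x. x \<in> S \<Longrightarrow> 0 \<le> g x"
  shows "\<alpha> * (\<Sum>x\<in>S. n x * g x)
    \<le> (\<Sum>x\<in>S. \<Sum>y\<in>S. b x y * max (g x - g y) 0) + (\<Sum>x\<in>S. k x * g x)"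
  using g
proof (induction "card {x\<in>S. 0 < g x}" arbitrary: g rule: less_induct)
  case less
  define P where "P = {x\<in>S. 0 < g x}"
  have P: "P \<subseteq> S" "finite P"
    using S by (auto simp: P_def)
  show ?case
  proof (cases "P = {}")
    case True
    then have "\<And>x. x \<in> S \<Longrightarrow> g x = 0"
      using less.prems by (force simp: P_def)
    then show ?thesis
      using b by (simp add: sum_nonneg)
  next
    case False
    define m where "m = Min (g ` P)"
    have "m \<in> g ` P"
      unfolding m_def using P False by (intro Min_in) simp_all
    then obtain x0 where x0: "x0 \<in> P" "g x0 = m"
      by auto
    have m_le: "\<And>x. x \<in> P \<Longrightarrow> m \<le> g x" and m_pos: "0 < m"
      using P x0 by (auto simp: m_def P_def)
    define g' where "g' x = (if x \<in> P then g x - m else 0)" for x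
    have g'_nonneg: "\<And>x. x \<in> S \<Longrightarrow> 0 \<le> g' x"
      using m_le by (auto simp: g'_def)
    have "card {x\<in>S. 0 < g' x} \<le> card (P - {x0})"
      using P x0 by (intro card_mono) (auto simp: g'_def P_def)
    also have "\<dots> < card P"
      using P x0 by (intro card_Diff1_less)
    finally have IH: "\<alpha> * (\<Sum>x\<in>S. n x * g' x)
        \<le> (\<Sum>x\<in>S. \<Sum>y\<in>S. b x y * max (g' x - g' y) 0) + (\<Sum>x\<in>S. k x * g' x)"
      using less.hyps g'_nonneg unfolding P_def by blast
    have g_split: "g x = (if x \<in> P then m else 0) + g' x" if "x \<in> S" for x
      using that less.prems[of x] by (auto simp: g'_def P_def)
    have layer: "max (g x - g y) 0 = (if x \<in> P \<and> y \<notin> P then m else 0) + max (g' x - g' y) 0"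
      if "x \<in> S" "y \<in> S" for x y
      using that m_le less.prems[of x] less.prems[of y] m_pos by (auto simp: g'_def P_def)
    have edge_layer: "(\<Sum>x\<in>S. \<Sum>y\<in>S. b x y * max (g x - g y) 0)
      = m * (\<Sum>x\<in>P. \<Sum>y\<in>S - P. b x y) + (\<Sum>x\<in>S. \<Sum>y\<in>S. b x y * max (g' x - g' y) 0)"
      by (rule layer_split(1)[OF S P(1) g_split layer])
    have vertex_layer: "(\<Sum>x\<in>S. h x * g x) = m * (\<Sum>x\<in>P. h x) + (\<Sum>x\<in>S. h x * g' x)" for h
      by (rule layer_split(2)[OF S P(1) g_split layer])
    have "m * (\<alpha> * (\<Sum>x\<in>P. n x)) \<le> m * ((\<Sum>x\<in>P. \<Sum>y\<in>S - P. b x y) + (\<Sum>x\<in>P. k x))"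
      using isoperimetric[OF P(1)] m_pos by simp
    then show ?thesis
      using IH unfolding edge_layer vertex_layer[of n] vertex_layer[of k] by (simp add: algebra_simps)
  qed
qed

lemma weighted_cauchy_schwarz:
  fixes w p q :: "'i \<Rightarrow> real"
  assumes "\<And>i. i \<in> I \<Longrightarrow> 0 \<le> w i"
  shows "(\<Sum>i\<in>I. w i * p i * q i)^2 \<le> (\<Sum>i\<in>I. w i * (p i)^2) * (\<Sum>i\<in>I. w i * (q i)^2)"
proof -
  have "(\<Sum>i\<in>I. (sqrt (w i) * p i) * (sqrt (w i) * q i))^2
      \<le> (\<Sum>i\<in>I. (sqrt (w i) * p i)^2) * (\<Sum>i\<in>I. (sqrt (w i) * q i)^2)"
    by (rule Cauchy_Schwarz_ineq_sum)
  moreover have "\<And>i. i \<in> I \<Longrightarrow> (sqrt (w i) * p i) * (sqrt (w i) * q i) = w i * p i * q i"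
    using assms by (simp add: algebra_simps flip: power2_eq_square)
  moreover have "\<And>i r. i \<in> I \<Longrightarrow> (sqrt (w i) * r)^2 = w i * r^2"
    using assms by (simp add: power_mult_distrib)
  ultimately show ?thesis
    by (simp cong: sum.cong)
qed

lemma sum_positive_part_sym:
  fixes b :: "'v \<Rightarrow> 'v \<Rightarrow> real" and h :: "'v \<Rightarrow> real"
  assumes "\<And>x y. b x y = b y x"
  shows "(\<Sum>x\<in>S. \<Sum>y\<in>S. b x y * max (h x - h y) 0) = (1/2) * (\<Sum>x\<in>S. \<Sum>y\<in>S. b x y * \<bar>h x - h y\<bar>)"
proof -
  have "\<bar>h x - h y\<bar> = max (h x - h y) 0 + max (h y - h x) 0" for x y
    by (auto simp: max_def abs_real_def)
  then have "(\<Sum>x\<in>S. \<Sum>y\<in>S. b x y * \<bar>h x - h y\<bar>)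
      = (\<Sum>x\<in>S. \<Sum>y\<in>S. b x y * max (h x - h y) 0) + (\<Sum>x\<in>S. \<Sum>y\<in>S. b x y * max (h y - h x) 0)"
    by (simp add: sum.distrib[symmetric] distrib_left[symmetric])
  also have "(\<Sum>x\<in>S. \<Sum>y\<in>S. b x y * max (h y - h x) 0) = (\<Sum>x\<in>S. \<Sum>y\<in>S. b x y * max (h x - h y) 0)"
    by (rule sum_sym_swap[OF assms])
  finally show ?thesis
    by simp
qed

lemma finite_cheeger:
  fixes b :: "'v \<Rightarrow> 'v \<Rightarrow> real" and k f :: "'v \<Rightarrow> real"
  assumes S: "finite S" and b: "\<And>x y. 0 \<le> b x y" and b_sym: "\<And>x y. b x y = b y x"
    and k: "\<And>x. x \<in> S \<Longrightarrow> 0 \<le> k x" and \<alpha>: "0 \<le> \<alpha>" "\<alpha> \<le> 1"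
    and isoperimetric: "\<And>W. W \<subseteq> S \<Longrightarrow>
      \<alpha> * (\<Sum>x\<in>W. (\<Sum>y\<in>S. b x y) + k x) \<le> (\<Sum>x\<in>W. \<Sum>y\<in>S - W. b x y) + (\<Sum>x\<in>W. k x)"
  shows "\<bar>(1/2) * (\<Sum>x\<in>S. \<Sum>y\<in>S. b x y * (f x - f y)^2) + (\<Sum>x\<in>S. k x * (f x)^2)
          - (\<Sum>x\<in>S. ((\<Sum>y\<in>S. b x y) + k x) * (f x)^2)\<bar>
      \<le> sqrt (1 - \<alpha>^2) * (\<Sum>x\<in>S. ((\<Sum>y\<in>S. b x y) + k x) * (f x)^2)"
proof -
  define N where "N = (\<Sum>x\<in>S. ((\<Sum>y\<in>S. b x y) + k x) * (f x)^2)"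
  define Y where "Y = (\<Sum>x\<in>S. k x * (f x)^2)"
  define X where "X = (\<Sum>(x, y)\<in>S \<times> S. (b x y / 2) * \<bar>f x - f y\<bar> * \<bar>f x + f y\<bar>)"
  define P where "P = (\<Sum>(x, y)\<in>S \<times> S. (b x y / 2) * \<bar>f x - f y\<bar>^2)"
  define R where "R = (\<Sum>(x, y)\<in>S \<times> S. (b x y / 2) * \<bar>f x + f y\<bar>^2)"
  have pairs: "(\<Sum>(x, y)\<in>S \<times> S. h x y) = (\<Sum>x\<in>S. \<Sum>y\<in>S. h x y)" for h :: "'v \<Rightarrow> 'v \<Rightarrow> real"
    by (simp add: sum.cartesian_product)
  have "\<alpha> * N \<le> (\<Sum>x\<in>S. \<Sum>y\<in>S. b x y * max ((f x)^2 - (f y)^2) 0) + Y"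
    unfolding N_def Y_def using S b isoperimetric by (intro coarea_inequality) auto
  also have "(\<Sum>x\<in>S. \<Sum>y\<in>S. b x y * max ((f x)^2 - (f y)^2) 0) = X"
    unfolding sum_positive_part_sym[OF b_sym] X_def pairs
    by (simp add: sum_distrib_left abs_mult[symmetric] power2_eq_square algebra_simps)
  finally have coarea: "\<alpha> * N \<le> X + Y" .
  have cauchy_schwarz: "X^2 \<le> P * R"
    unfolding X_def P_def R_def split_def using b by (intro weighted_cauchy_schwarz) simp
  have "P + R = (\<Sum>x\<in>S. \<Sum>y\<in>S. b x y * (f x)^2) + (\<Sum>x\<in>S. \<Sum>y\<in>S. b x y * (f y)^2)"
    unfolding P_def R_def pairs
    by (simp add: sum.distrib[symmetric] power2_eq_square algebra_simps cong: sum.cong)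
  also have "(\<Sum>x\<in>S. \<Sum>y\<in>S. b x y * (f y)^2) = (\<Sum>x\<in>S. \<Sum>y\<in>S. b x y * (f x)^2)"
    using sum_sym_swap[OF b_sym, where S=S and h="\<lambda>x y. (f x)^2"] by simp
  finally have parallelogram: "P + R + 2 * Y = 2 * N"
    unfolding N_def Y_def by (simp add: sum_distrib_right sum.distrib distrib_right)
  have nonneg: "0 \<le> X" "0 \<le> Y" "0 \<le> P" "0 \<le> R"
    unfolding X_def Y_def P_def R_def using b k by (auto intro!: sum_nonneg)
  have "(1/2) * (\<Sum>x\<in>S. \<Sum>y\<in>S. b x y * (f x - f y)^2) + Y = P + Y"
    unfolding P_def pairs by (simp add: sum_distrib_left)
  then show ?thesis
    using cheeger_algebra[OF nonneg \<alpha> coarea cauchy_schwarz parallelogram]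
    unfolding N_def Y_def by simp
qed


subsection \<open>Finitely supported functions on the graph\<close>

lemma weighted_graphD:
  assumes "weighted_graph b c"
  shows "0 \<le> b x y" and "0 \<le> c x" and "b x y = b y x" and "b x summable_on A"
  using assms summable_on_subset_banach[of "b x" UNIV A] unfolding weighted_graph_def by auto

lemma infsum_tail_split:
  fixes f :: "'a \<Rightarrow> real"
  assumes f: "f summable_on UNIV" and "S \<subseteq> T" and "finite T"
  shows "infsum f (-S) = (\<Sum>y\<in>T - S. f y) + infsum f (-T)"
proof -
  have split: "-S = (T - S) \<union> -T"
    using assms(2) by auto
  have "infsum f ((T - S) \<union> -T) = infsum f (T - S) + infsum f (-T)"
    by (intro infsum_Un_disjoint summable_on_subset_banach[OF f]) auto
  then show ?thesis
    using assms(3) split by simp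
qed

(* For the reduction to a finite set S, the edges leaving S become a killing term. *)
lemma nweight_split:
  assumes "weighted_graph b c" and "finite S"
  shows "nweight b c x = (\<Sum>y\<in>S. b x y) + (c x + infsum (b x) (-S))"
  using infsum_tail_split[of "b x" "{}" S] weighted_graphD[OF assms(1)] assms(2)
  unfolding nweight_def by simp

lemma boundary_split:
  assumes "weighted_graph b c" and "finite S" and "W \<subseteq> S"
  shows "boundary b c W = (\<Sum>x\<in>W. \<Sum>y\<in>S - W. b x y) + (\<Sum>x\<in>W. c x + infsum (b x) (-S))"
  using infsum_tail_split[of "b _" W S] weighted_graphD[OF assms(1)] assms(2,3)
  unfolding boundary_def by (simp add: sum.distrib)

lemma has_sum_finite_sum:
  fixes g :: "'i \<Rightarrow> 'a \<Rightarrow> real"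
  assumes "finite I" and "\<And>i. i \<in> I \<Longrightarrow> (g i has_sum s i) A"
  shows "((\<lambda>x. \<Sum>i\<in>I. g i x) has_sum (\<Sum>i\<in>I. s i)) A"
  using assms by (induction I rule: finite_induct) (auto intro!: has_sum_add)

lemma nonneg_has_sum_rows:
  fixes F :: "'a \<times> 'b \<Rightarrow> real"
  assumes nonneg: "\<And>p. 0 \<le> F p"
    and rows: "\<And>x. ((\<lambda>y. F (x, y)) has_sum r x) UNIV" and total: "(r has_sum s) UNIV"
  shows "(F has_sum s) UNIV"
proof -
  have r: "infsum (\<lambda>y. norm (F (x, y))) UNIV = r x" "0 \<le> r x" for x
    using rows[of x] nonneg by (simp_all add: infsumI has_sum_nonneg)
  have "(\<lambda>p. norm (F p)) summable_on Sigma UNIV (\<lambda>_. UNIV)"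
  proof (subst Infinite_Sum.abs_summable_on_Sigma_iff, intro conjI ballI)
    fix x
    show "(\<lambda>y. norm (F (x, y))) summable_on UNIV"
      using rows[of x] nonneg by (auto simp: summable_on_def)
  next
    show "(\<lambda>x. norm (\<Sum>\<^sub>\<infinity>y. norm (F (x, y)))) summable_on UNIV"
      using has_sum_imp_summable[OF total] r by simp
  qed
  then have "F summable_on Sigma UNIV (\<lambda>_. UNIV)"
    by (rule abs_summable_summable)
  then show ?thesis
    using has_sum_SigmaI[OF rows total] by simp
qed

definition edge_weight :: "('v \<Rightarrow> 'v \<Rightarrow> real) \<Rightarrow> 'v \<times> 'v \<Rightarrow> real" where
  "edge_weight b e = b (fst e) (snd e)"

definition gradient :: "('v \<Rightarrow> real) \<Rightarrow> 'v \<times> 'v \<Rightarrow> real" where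
  "gradient g e = g (fst e) - g (snd e)"

lemma Qmax_eq_norm2: "Qmax b c g = (1/2) * norm2 (edge_weight b) (gradient g) + norm2 c g"
  unfolding Qmax_def norm2_def edge_weight_def gradient_def by (simp add: case_prod_unfold)

lemma edge_energy_row:
  assumes wg: "weighted_graph b c" and S: "finite S" and f0: "\<And>y. y \<notin> S \<Longrightarrow> f y = 0"
  shows "((\<lambda>y. b x y * (f x - f y)^2) has_sum
           (if x \<in> S then (\<Sum>y\<in>S. b x y * (f x - f y)^2) + (f x)^2 * infsum (b x) (-S)
            else (\<Sum>y\<in>S. b y x * (f y)^2))) UNIV"
proof (cases "x \<in> S")
  case True
  have "((\<lambda>y. (f x)^2 * b x y) has_sum ((f x)^2 * infsum (b x) (-S))) (-S)"
    using weighted_graphD(4)[OF wg] by (intro has_sum_cmult_right has_sum_infsum)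
  then have outer: "((\<lambda>y. b x y * (f x - f y)^2) has_sum ((f x)^2 * infsum (b x) (-S))) (-S)"
    by (rule has_sum_cong[THEN iffD1, rotated]) (simp add: f0)
  have inner: "((\<lambda>y. b x y * (f x - f y)^2) has_sum (\<Sum>y\<in>S. b x y * (f x - f y)^2)) S"
    using S by (rule has_sum_finiteI) simp
  have "((\<lambda>y. b x y * (f x - f y)^2) has_sum
      ((\<Sum>y\<in>S. b x y * (f x - f y)^2) + (f x)^2 * infsum (b x) (-S))) (S \<union> -S)"
    by (rule has_sum_Un_disjoint[OF inner outer]) auto
  then show ?thesis
    using True by simp
next
  case False
  have "((\<lambda>y. b x y * (f x - f y)^2) has_sum (\<Sum>y\<in>S. b x y * (f x - f y)^2)) UNIV"
    using S f0 False by (intro has_sum_finite_neutralI) auto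
  then show ?thesis
    using False f0 weighted_graphD(3)[OF wg] by simp
qed

lemma edge_energy_finite_support:
  assumes wg: "weighted_graph b c" and S: "finite S" and f0: "\<And>y. y \<notin> S \<Longrightarrow> f y = 0"
  shows "((\<lambda>(x, y). b x y * (f x - f y)^2) has_sum
    ((\<Sum>x\<in>S. \<Sum>y\<in>S. b x y * (f x - f y)^2) + 2 * (\<Sum>x\<in>S. (f x)^2 * infsum (b x) (-S)))) UNIV"
proof -
  define r where "r x = (if x \<in> S then (\<Sum>y\<in>S. b x y * (f x - f y)^2) + (f x)^2 * infsum (b x) (-S)
    else (\<Sum>y\<in>S. b y x * (f y)^2))" for x
  have inside: "(r has_sum ((\<Sum>x\<in>S. \<Sum>y\<in>S. b x y * (f x - f y)^2)
      + (\<Sum>x\<in>S. (f x)^2 * infsum (b x) (-S)))) S"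
    using S by (intro has_sum_finiteI) (simp_all add: r_def sum.distrib)
  have "((\<lambda>x. \<Sum>y\<in>S. (f y)^2 * b y x) has_sum (\<Sum>y\<in>S. (f y)^2 * infsum (b y) (-S))) (-S)"
    using S weighted_graphD(4)[OF wg] by (intro has_sum_finite_sum has_sum_cmult_right has_sum_infsum)
  then have outside: "(r has_sum (\<Sum>x\<in>S. (f x)^2 * infsum (b x) (-S))) (-S)"
    by (rule has_sum_cong[THEN iffD1, rotated]) (simp_all add: r_def mult.commute)
  have "(r has_sum ((\<Sum>x\<in>S. \<Sum>y\<in>S. b x y * (f x - f y)^2)
      + (\<Sum>x\<in>S. (f x)^2 * infsum (b x) (-S)) + (\<Sum>x\<in>S. (f x)^2 * infsum (b x) (-S)))) (S \<union> -S)"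
    by (rule has_sum_Un_disjoint[OF inside outside]) auto
  then show ?thesis
    using weighted_graphD(1)[OF wg] edge_energy_row[where f = f, OF wg S f0]
    by (intro nonneg_has_sum_rows[where r = r]) (simp_all add: r_def add.commute split: prod.splits)
qed

definition finite_energy :: "('v \<Rightarrow> 'v \<Rightarrow> real) \<Rightarrow> ('v \<Rightarrow> real) \<Rightarrow> ('v \<Rightarrow> real) \<Rightarrow> bool" where
  "finite_energy b c g \<longleftrightarrow> in_l2 (edge_weight b) (gradient g) \<and> in_l2 c g"

lemma Qmax_finite_support:
  assumes wg: "weighted_graph b c" and S: "finite S" and f0: "\<And>y. y \<notin> S \<Longrightarrow> f y = 0"
  shows "finite_energy b c f"
    and "Qmax b c f = (1/2) * (\<Sum>x\<in>S. \<Sum>y\<in>S. b x y * (f x - f y)^2)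
                       + (\<Sum>x\<in>S. (c x + infsum (b x) (-S)) * (f x)^2)"
proof -
  have edges: "(\<lambda>(x, y). b x y * (f x - f y)^2) = (\<lambda>e. edge_weight b e * (gradient f e)^2)"
    by (auto simp: edge_weight_def gradient_def)
  note energy = edge_energy_finite_support[where f = f, OF wg S f0, unfolded edges]
  show "finite_energy b c f"
    using energy l2_finite_support(1)[where g = f, OF S f0] unfolding finite_energy_def in_l2_def
    by (auto simp: has_sum_iff)
  show "Qmax b c f = (1/2) * (\<Sum>x\<in>S. \<Sum>y\<in>S. b x y * (f x - f y)^2)
                       + (\<Sum>x\<in>S. (c x + infsum (b x) (-S)) * (f x)^2)"
    using energy l2_finite_support(2)[where g = f and m = c, OF S f0] unfolding Qmax_eq_norm2 norm2_def
    by (simp add: infsumI sum.distrib distrib_right algebra_simps)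
qed


subsection \<open>The Cheeger constant and the estimate for finitely supported functions\<close>

lemma boundary_nonneg:
  assumes "weighted_graph b c"
  shows "0 \<le> boundary b c W"
  unfolding boundary_def using weighted_graphD[OF assms]
  by (simp add: sum_nonneg infsum_nonneg)

definition cheeger_ratios :: "('v \<Rightarrow> 'v \<Rightarrow> real) \<Rightarrow> ('v \<Rightarrow> real) \<Rightarrow> real set" where
  "cheeger_ratios b c =
     {boundary b c W / (\<Sum>x\<in>W. nweight b c x) | W. W \<subseteq> UNIV \<and> finite W \<and> W \<noteq> {}}"

lemma alpha_eq_Inf: "alpha b c UNIV = Inf (cheeger_ratios b c)"
  unfolding alpha_def cheeger_ratios_def ..

lemma cheeger_ratio_nonneg:
  assumes wg: "weighted_graph b c" and npos: "\<forall>x. 0 < nweight b c x"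
    and "t \<in> cheeger_ratios b c"
  shows "0 \<le> t"
proof -
  obtain W where t: "t = boundary b c W / (\<Sum>x\<in>W. nweight b c x)"
    using assms(3) unfolding cheeger_ratios_def by blast
  have "0 \<le> (\<Sum>x\<in>W. nweight b c x)"
    using npos by (simp add: sum_nonneg less_imp_le)
  then show ?thesis
    unfolding t by (rule divide_nonneg_nonneg[OF boundary_nonneg[OF wg]])
qed

lemma alpha_nonneg:
  assumes "weighted_graph b c" and "\<forall>x. 0 < nweight b c x"
  shows "0 \<le> alpha b c UNIV"
  unfolding alpha_eq_Inf
proof (rule cInf_greatest)
  have "boundary b c {undefined} / (\<Sum>x\<in>{undefined}. nweight b c x) \<in> cheeger_ratios b c"
    unfolding cheeger_ratios_def by blast
  then show "cheeger_ratios b c \<noteq> {}"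
    by blast
qed (rule cheeger_ratio_nonneg[OF assms])

lemma alpha_isoperimetric:
  assumes wg: "weighted_graph b c" and npos: "\<forall>x. 0 < nweight b c x"
    and W: "finite W" "W \<noteq> {}"
  shows "alpha b c UNIV * (\<Sum>x\<in>W. nweight b c x) \<le> boundary b c W"
proof -
  have "alpha b c UNIV \<le> boundary b c W / (\<Sum>x\<in>W. nweight b c x)"
    unfolding alpha_eq_Inf
  proof (rule cInf_lower)
    show "boundary b c W / (\<Sum>x\<in>W. nweight b c x) \<in> cheeger_ratios b c"
      unfolding cheeger_ratios_def using W by blast
    show "bdd_below (cheeger_ratios b c)"
      using cheeger_ratio_nonneg[OF wg npos] by (rule bdd_belowI)
  qed
  moreover have "0 < (\<Sum>x\<in>W. nweight b c x)"
    using W npos by (intro sum_pos) auto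
  ultimately show ?thesis
    by (simp add: pos_le_divide_eq)
qed

lemma alpha_le_one:
  fixes b :: "'v \<Rightarrow> 'v \<Rightarrow> real"
  assumes wg: "weighted_graph b c" and npos: "\<forall>x. 0 < nweight b c x"
  shows "alpha b c UNIV \<le> 1"
proof -
  fix x :: 'v
  have "alpha b c UNIV * nweight b c x \<le> boundary b c {x}"
    using alpha_isoperimetric[OF wg npos, of "{x}"] by simp
  also have "\<dots> = infsum (b x) (-{x}) + c x"
    unfolding boundary_def by simp
  also have "\<dots> \<le> nweight b c x"
    unfolding nweight_def using weighted_graphD[OF wg]
    by (simp add: infsum_mono2)
  finally show ?thesis
    using npos by simp
qed

(* The Cheeger estimate for functions vanishing outside a finite set S: by the
   decomposition of Qmax and n on S, it is the finite estimate with killing term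
   c x + b(x, V - S), whose isoperimetric hypothesis is that of alpha. *)
lemma cheeger_finite_support:
  assumes wg: "weighted_graph b c" and npos: "\<forall>x. 0 < nweight b c x"
    and S: "finite S" and f0: "\<And>x. x \<notin> S \<Longrightarrow> f x = 0"
  shows "\<bar>Qmax b c f - norm2 (nweight b c) f\<bar>
    \<le> sqrt (1 - (alpha b c UNIV)^2) * norm2 (nweight b c) f"
proof -
  define k where "k x = c x + infsum (b x) (-S)" for x
  have n: "nweight b c x = (\<Sum>y\<in>S. b x y) + k x" for x
    unfolding k_def by (rule nweight_split[OF wg S])
  have k: "0 \<le> k x" for x
    unfolding k_def using weighted_graphD[OF wg] by (simp add: infsum_nonneg)
  have isoperimetric: "alpha b c UNIV * (\<Sum>x\<in>W. (\<Sum>y\<in>S. b x y) + k x)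
      \<le> (\<Sum>x\<in>W. \<Sum>y\<in>S - W. b x y) + (\<Sum>x\<in>W. k x)" if W: "W \<subseteq> S" for W
  proof (cases "W = {}")
    case False
    then have "alpha b c UNIV * (\<Sum>x\<in>W. nweight b c x) \<le> boundary b c W"
      using W S by (intro alpha_isoperimetric[OF wg npos]) (auto intro: finite_subset)
    then show ?thesis
      unfolding n boundary_split[OF wg S W] k_def .
  qed simp
  have "\<bar>(1/2) * (\<Sum>x\<in>S. \<Sum>y\<in>S. b x y * (f x - f y)^2) + (\<Sum>x\<in>S. k x * (f x)^2)
          - (\<Sum>x\<in>S. ((\<Sum>y\<in>S. b x y) + k x) * (f x)^2)\<bar>
      \<le> sqrt (1 - (alpha b c UNIV)^2) * (\<Sum>x\<in>S. ((\<Sum>y\<in>S. b x y) + k x) * (f x)^2)"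
    using finite_cheeger[OF S weighted_graphD(1,3)[OF wg] k alpha_nonneg[OF wg npos]
        alpha_le_one[OF wg npos] isoperimetric] by simp
  moreover have "norm2 (nweight b c) f = (\<Sum>x\<in>S. ((\<Sum>y\<in>S. b x y) + k x) * (f x)^2)"
    using l2_finite_support(2)[where g = f, OF S f0] by (simp add: n)
  moreover have "Qmax b c f = (1/2) * (\<Sum>x\<in>S. \<Sum>y\<in>S. b x y * (f x - f y)^2) + (\<Sum>x\<in>S. k x * (f x)^2)"
    unfolding k_def by (rule Qmax_finite_support(2)[where f = f, OF wg S f0])
  ultimately show ?thesis
    by simp
qed


subsection \<open>Convergence along approximating sequences\<close>

lemma gradient_add: "gradient (\<lambda>x. g x + h x) = (\<lambda>e. gradient g e + gradient h e)"
  by (simp add: gradient_def fun_eq_iff)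

lemma gradient_uminus: "gradient (\<lambda>x. - g x) = (\<lambda>e. - gradient g e)"
  by (simp add: gradient_def fun_eq_iff)

lemma energy_uminus [simp]:
  "finite_energy b c (\<lambda>x. - g x) \<longleftrightarrow> finite_energy b c g"
  "Qmax b c (\<lambda>x. - g x) = Qmax b c g"
  by (simp_all add: finite_energy_def Qmax_eq_norm2 gradient_uminus)

lemma edge_weight_nonneg: "weighted_graph b c \<Longrightarrow> 0 \<le> edge_weight b e"
  unfolding edge_weight_def by (rule weighted_graphD(1))

lemma Qmax_nonneg:
  assumes "weighted_graph b c"
  shows "0 \<le> Qmax b c g"
  unfolding Qmax_eq_norm2 using assms
  by (simp add: norm2_nonneg edge_weight_nonneg weighted_graphD(2))

lemma finite_energy_add:
  assumes wg: "weighted_graph b c" and "finite_energy b c g" and "finite_energy b c h"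
  shows "finite_energy b c (\<lambda>x. g x + h x)"
  using assms unfolding finite_energy_def gradient_add
  by (simp add: in_l2_add edge_weight_nonneg weighted_graphD(2))

lemma Qmax_add_le:
  assumes wg: "weighted_graph b c" and g: "finite_energy b c g" and h: "finite_energy b c h"
    and t: "0 < t"
  shows "Qmax b c (\<lambda>x. g x + h x) \<le> (1 + t) * Qmax b c g + (1 + 1/t) * Qmax b c h"
proof -
  have edges: "norm2 (edge_weight b) (gradient (\<lambda>x. g x + h x))
      \<le> (1 + t) * norm2 (edge_weight b) (gradient g) + (1 + 1/t) * norm2 (edge_weight b) (gradient h)"
    unfolding gradient_add using g h t edge_weight_nonneg[OF wg]
    by (intro norm2_add_le) (simp_all add: finite_energy_def)
  have vertices: "norm2 c (\<lambda>x. g x + h x) \<le> (1 + t) * norm2 c g + (1 + 1/t) * norm2 c h"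
    using g h t weighted_graphD(2)[OF wg] by (intro norm2_add_le) (simp_all add: finite_energy_def)
  have "Qmax b c (\<lambda>x. g x + h x)
      \<le> (1/2) * ((1 + t) * norm2 (edge_weight b) (gradient g) + (1 + 1/t) * norm2 (edge_weight b) (gradient h))
        + ((1 + t) * norm2 c g + (1 + 1/t) * norm2 c h)"
    unfolding Qmax_eq_norm2 using edges vertices by (intro add_mono mult_left_mono) simp_all
  also have "\<dots> = (1 + t) * Qmax b c g + (1 + 1/t) * Qmax b c h"
    unfolding Qmax_eq_norm2 by (simp add: algebra_simps add_divide_distrib)
  finally show ?thesis .
qed

(* Fatou's lemma for Qmax: a pointwise limit of functions of energy at most e has energy
   at most 2 e (each of the two parts of Qmax is controlled separately). *)
lemma Qmax_fatou:
  assumes wg: "weighted_graph b c" and h: "\<And>j. finite_energy b c (h j)"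
    and lim: "\<And>x. (\<lambda>j. h j x) \<longlonglongrightarrow> g x"
    and bound: "\<And>j. N \<le> j \<Longrightarrow> Qmax b c (h j) \<le> e"
  shows "finite_energy b c g" and "Qmax b c g \<le> 2 * e"
proof -
  have parts: "norm2 (edge_weight b) (gradient (h j)) \<le> 2 * e" "norm2 c (h j) \<le> e" if "N \<le> j" for j
    using bound[OF that] norm2_nonneg[where m = "edge_weight b" and g = "gradient (h j)", OF edge_weight_nonneg[OF wg]]
      norm2_nonneg[where m = c and g = "h j"] weighted_graphD(2)[OF wg]
    unfolding Qmax_eq_norm2 by auto
  have grad: "in_l2 (edge_weight b) (gradient (h j))" and vert: "in_l2 c (h j)" for j
    using h[of j] by (simp_all add: finite_energy_def)
  have grad_lim: "(\<lambda>j. gradient (h j) p) \<longlonglongrightarrow> gradient g p" for p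
    unfolding gradient_def by (intro tendsto_diff lim)
  note edges = l2_fatou[where m = "edge_weight b" and N = N, OF edge_weight_nonneg[OF wg] grad grad_lim parts(1)]
  note vertices = l2_fatou[where m = c and N = N, OF weighted_graphD(2)[OF wg] vert lim parts(2)]
  show "finite_energy b c g"
    using edges vertices unfolding finite_energy_def by simp
  show "Qmax b c g \<le> 2 * e"
    using edges vertices
    unfolding Qmax_eq_norm2 by simp
qed

lemma tendsto_of_quasi_triangle:
  fixes a \<delta> :: "nat \<Rightarrow> real"
  assumes L: "0 \<le> L" and \<delta>: "\<delta> \<longlonglongrightarrow> 0" "\<And>k. 0 \<le> \<delta> k"
    and bounds: "\<And>k t. N \<le> k \<Longrightarrow> 0 < t \<Longrightarrow>
      a k \<le> (1 + t) * L + (1 + 1/t) * \<delta> k \<and> L \<le> (1 + t) * a k + (1 + 1/t) * \<delta> k"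
  shows "a \<longlonglongrightarrow> L"
proof (rule LIMSEQ_I)
  fix r :: real
  assume r: "0 < r"
  define t where "t = r / (2 * (L + 1))"
  define C where "C = 1 + 1/t"
  have t: "0 < t" "t * L < r / 2"
    using r L by (auto simp: t_def field_simps)
  have C: "0 < C"
    using t by (simp add: C_def add_pos_pos)
  have "0 < r / (2 * C)"
    using r C by simp
  then obtain M where M: "\<forall>k\<ge>M. norm (\<delta> k - 0) < r / (2 * C)"
    using LIMSEQ_D[OF \<delta>(1)] by blast
  have "\<bar>a k - L\<bar> < r" if k: "max N M \<le> k" for k
  proof -
    have up: "a k \<le> (1 + t) * L + C * \<delta> k" and low: "L \<le> (1 + t) * a k + C * \<delta> k"
      using bounds[of k t] k t unfolding C_def by auto
    have C\<delta>: "0 \<le> C * \<delta> k" "C * \<delta> k < r / 2"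
      using C \<delta>(2)[of k] M[rule_format, of k] k by (simp_all add: field_simps)
    have "(1 + t) * (L - t * L - C * \<delta> k) = L - C * \<delta> k - t * t * L - t * (C * \<delta> k)"
      by (simp add: algebra_simps)
    moreover have "0 \<le> t * t * L" "0 \<le> t * (C * \<delta> k)"
      using t L C\<delta> by simp_all
    ultimately have "(1 + t) * (L - t * L - C * \<delta> k) \<le> L - C * \<delta> k"
      by linarith
    then have "L - t * L - C * \<delta> k \<le> a k"
      using low t by (smt (verit) mult_le_cancel_left_pos)
    then show ?thesis
      using up t C\<delta> by (simp add: algebra_simps abs_less_iff)
  qed
  then show "\<exists>M. \<forall>k\<ge>M. norm (a k - L) < r"
    by (intro exI[of _ "max N M"]) simp
qed

lemma tendsto_quasi_norm:
  fixes q :: "('v \<Rightarrow> real) \<Rightarrow> real" and D :: "('v \<Rightarrow> real) \<Rightarrow> bool"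
  assumes add: "\<And>g h t. D g \<Longrightarrow> D h \<Longrightarrow> 0 < t \<Longrightarrow>
      q (\<lambda>x. g x + h x) \<le> (1 + t) * q g + (1 + 1/t) * q h"
    and uminus: "\<And>g. D g \<Longrightarrow> D (\<lambda>x. - g x) \<and> q (\<lambda>x. - g x) = q g"
    and nonneg: "\<And>g. 0 \<le> q g"
    and u: "D u" and f: "\<And>k. D (f k)" and d: "\<And>k. N \<le> k \<Longrightarrow> D (\<lambda>x. f k x - u x)"
    and lim: "(\<lambda>k. q (\<lambda>x. f k x - u x)) \<longlonglongrightarrow> 0"
  shows "(\<lambda>k. q (f k)) \<longlonglongrightarrow> q u"
proof (rule tendsto_of_quasi_triangle[OF nonneg lim nonneg])
  fix k :: nat and t :: real
  assume k: "N \<le> k" and t: "0 < t"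
  have "q (f k) = q (\<lambda>x. u x + (f k x - u x))"
    by simp
  also have "\<dots> \<le> (1 + t) * q u + (1 + 1/t) * q (\<lambda>x. f k x - u x)"
    using add[OF u d[OF k] t] .
  finally have upper: "q (f k) \<le> (1 + t) * q u + (1 + 1/t) * q (\<lambda>x. f k x - u x)" .
  define dk where "dk = (\<lambda>x. f k x - u x)"
  have dk: "D (\<lambda>x. - dk x)" "q (\<lambda>x. - dk x) = q dk"
    using uminus[OF d[OF k, folded dk_def]] by simp_all
  have "q u = q (\<lambda>x. f k x + - dk x)"
    by (simp add: dk_def)
  also have "\<dots> \<le> (1 + t) * q (f k) + (1 + 1/t) * q dk"
    using add[OF f dk(1) t] dk(2) by simp
  finally have lower: "q u \<le> (1 + t) * q (f k) + (1 + 1/t) * q (\<lambda>x. f k x - u x)"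
    by (simp add: dk_def)
  show "q (f k) \<le> (1 + t) * q u + (1 + 1/t) * q (\<lambda>x. f k x - u x) \<and>
      q u \<le> (1 + t) * q (f k) + (1 + 1/t) * q (\<lambda>x. f k x - u x)"
    using upper lower ..
qed

lemma fin_supp_in_l2: "fin_supp g \<Longrightarrow> in_l2 m g"
  unfolding fin_supp_def by (rule l2_finite_support(1)) auto

lemma fin_supp_finite_energy: "weighted_graph b c \<Longrightarrow> fin_supp g \<Longrightarrow> finite_energy b c g"
  unfolding fin_supp_def by (rule Qmax_finite_support(1)) auto

lemma approx_seq_l2_diff:
  assumes "\<forall>x. 0 < nweight b c x" and "approx_seq b c f u"
  shows "in_l2 (nweight b c) (\<lambda>x. f k x - u x)"
proof -
  have "in_l2 (nweight b c) (f k)" "in_l2 (nweight b c) (\<lambda>x. - u x)"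
    using assms(2) by (simp_all add: approx_seq_def fin_supp_in_l2)
  then show ?thesis
    using in_l2_add[of "nweight b c" "f k" "\<lambda>x. - u x"] assms(1) by (simp add: less_imp_le)
qed

lemma approx_seq_pointwise:
  assumes npos: "\<forall>x. 0 < nweight b c x" and ap: "approx_seq b c f u"
  shows "(\<lambda>k. f k x) \<longlonglongrightarrow> u x"
proof -
  have lim: "(\<lambda>k. norm2 (nweight b c) (\<lambda>x. f k x - u x)) \<longlonglongrightarrow> 0"
    using ap unfolding approx_seq_def by simp
  have "(f k x - u x)^2 \<le> norm2 (nweight b c) (\<lambda>x. f k x - u x) / nweight b c x" for k
    using norm2_ge_term[OF _ approx_seq_l2_diff[OF npos ap], of x] npos
    by (simp add: pos_le_divide_eq less_imp_le mult.commute)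
  then have "(\<lambda>k. (f k x - u x)^2) \<longlonglongrightarrow> 0"
    by (intro tendsto_sandwich[OF _ _ tendsto_const tendsto_divide_zero[OF lim, of "nweight b c x"]]) simp_all
  then have "(\<lambda>k. \<bar>f k x - u x\<bar>) \<longlonglongrightarrow> 0"
    using tendsto_real_sqrt by fastforce
  then show ?thesis
    by (simp add: LIM_zero_iff tendsto_rabs_zero_iff)
qed

(* The Cauchy property of an approximating sequence and Fatou's lemma give
   Qmax (f k - u) <= 2 e for all large k. *)
lemma approx_seq_energy_tail:
  assumes wg: "weighted_graph b c" and npos: "\<forall>x. 0 < nweight b c x"
    and ap: "approx_seq b c f u" and e: "0 < e"
  shows "\<exists>N. \<forall>k\<ge>N. finite_energy b c (\<lambda>x. f k x - u x) \<and> Qmax b c (\<lambda>x. f k x - u x) \<le> 2 * e"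
proof -
  obtain N where N: "\<And>k j. N \<le> k \<Longrightarrow> N \<le> j \<Longrightarrow> Qmax b c (\<lambda>x. f k x - f j x) < e"
    using ap e unfolding approx_seq_def by blast
  have f: "finite_energy b c (f k)" for k
    using ap by (simp add: approx_seq_def fin_supp_finite_energy[OF wg])
  have "finite_energy b c (\<lambda>x. f k x - u x) \<and> Qmax b c (\<lambda>x. f k x - u x) \<le> 2 * e"
    if k: "N \<le> k" for k
  proof -
    have diffs: "finite_energy b c (\<lambda>x. f k x - f j x)" for j
      using finite_energy_add[OF wg f[of k], of "\<lambda>x. - f j x"] f[of j] by simp
    have lim: "(\<lambda>j. f k x - f j x) \<longlonglongrightarrow> f k x - u x" for x
      by (intro tendsto_diff tendsto_const approx_seq_pointwise[OF npos ap])
    have bound: "Qmax b c (\<lambda>x. f k x - f j x) \<le> e" if "N \<le> j" for j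
      using N[OF k that] by simp
    show ?thesis
      using Qmax_fatou[where h = "\<lambda>j x. f k x - f j x" and g = "\<lambda>x. f k x - u x", OF wg diffs lim bound]
      by simp
  qed
  then show ?thesis
    by blast
qed

lemma approx_seq_energy_tendsto:
  assumes wg: "weighted_graph b c" and npos: "\<forall>x. 0 < nweight b c x"
    and ap: "approx_seq b c f u"
  shows "(\<lambda>k. Qmax b c (\<lambda>x. f k x - u x)) \<longlonglongrightarrow> 0"
proof (rule LIMSEQ_I)
  fix r :: real
  assume "0 < r"
  then obtain M where M: "\<And>k. M \<le> k \<Longrightarrow> Qmax b c (\<lambda>x. f k x - u x) \<le> 2 * (r / 4)"
    using approx_seq_energy_tail[OF wg npos ap, of "r / 4"] by auto
  show "\<exists>M. \<forall>k\<ge>M. norm (Qmax b c (\<lambda>x. f k x - u x) - 0) < r"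
  proof (intro exI allI impI)
    fix k
    assume "M \<le> k"
    then show "norm (Qmax b c (\<lambda>x. f k x - u x) - 0) < r"
      using M[of k] Qmax_nonneg[OF wg, of "\<lambda>x. f k x - u x"] \<open>0 < r\<close> by simp
  qed
qed

lemma approx_seq_tendsto:
  assumes wg: "weighted_graph b c" and npos: "\<forall>x. 0 < nweight b c x"
    and ap: "approx_seq b c f u"
  shows "(\<lambda>k. Qmax b c (f k)) \<longlonglongrightarrow> Qmax b c u"
    and "(\<lambda>k. norm2 (nweight b c) (f k)) \<longlonglongrightarrow> norm2 (nweight b c) u"
proof -
  have n: "\<And>x. 0 \<le> nweight b c x"
    using npos less_imp_le by blast
  have f: "finite_energy b c (f k)" "in_l2 (nweight b c) (f k)" for k
    using ap by (simp_all add: approx_seq_def fin_supp_finite_energy[OF wg] fin_supp_in_l2)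
  obtain N where N: "\<And>k. N \<le> k \<Longrightarrow> finite_energy b c (\<lambda>x. f k x - u x)"
    using approx_seq_energy_tail[OF wg npos ap, of 1] by auto
  have "finite_energy b c (\<lambda>x. - (f N x - u x))"
    unfolding energy_uminus by (rule N) simp
  from finite_energy_add[OF wg f(1)[of N] this] have u: "finite_energy b c u"
    by simp
  have energy_lim: "(\<lambda>k. Qmax b c (\<lambda>x. f k x - u x)) \<longlonglongrightarrow> 0"
    by (rule approx_seq_energy_tendsto[OF wg npos ap])
  have energy_neg: "finite_energy b c (\<lambda>x. - g x) \<and> Qmax b c (\<lambda>x. - g x) = Qmax b c g"
    if "finite_energy b c g" for g
    using that by simp
  show "(\<lambda>k. Qmax b c (f k)) \<longlonglongrightarrow> Qmax b c u"
    by (rule tendsto_quasi_norm[where D = "finite_energy b c" and q = "Qmax b c",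
          OF Qmax_add_le[OF wg] energy_neg Qmax_nonneg[OF wg] u f(1) N energy_lim])
  have l2_neg: "in_l2 (nweight b c) (\<lambda>x. - g x) \<and> norm2 (nweight b c) (\<lambda>x. - g x) = norm2 (nweight b c) g"
    if "in_l2 (nweight b c) g" for g
    using that by simp
  have l2_lim: "(\<lambda>k. norm2 (nweight b c) (\<lambda>x. f k x - u x)) \<longlonglongrightarrow> 0" and u_l2: "in_l2 (nweight b c) u"
    using ap unfolding approx_seq_def by simp_all
  show "(\<lambda>k. norm2 (nweight b c) (f k)) \<longlonglongrightarrow> norm2 (nweight b c) u"
    by (rule tendsto_quasi_norm[where D = "in_l2 (nweight b c)" and q = "norm2 (nweight b c)" and N = 0,
          OF norm2_add_le[OF n] l2_neg norm2_nonneg[OF n] u_l2 f(2) approx_seq_l2_diff[OF npos ap] l2_lim])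
qed

lemma Qform_eq_Qmax:
  assumes wg: "weighted_graph b c" and npos: "\<forall>x. 0 < nweight b c x"
    and ap: "approx_seq b c f u"
  shows "Qform b c u = Qmax b c u"
  unfolding Qform_def
proof (rule the_equality)
  show "\<exists>f. approx_seq b c f u \<and> (\<lambda>k. Qmax b c (f k)) \<longlonglongrightarrow> Qmax b c u"
    using ap approx_seq_tendsto(1)[OF wg npos ap] by blast
next
  fix q
  assume "\<exists>f. approx_seq b c f u \<and> (\<lambda>k. Qmax b c (f k)) \<longlonglongrightarrow> q"
  then obtain g where "approx_seq b c g u" and "(\<lambda>k. Qmax b c (g k)) \<longlonglongrightarrow> q"
    by blast
  then show "q = Qmax b c u"
    using approx_seq_tendsto(1)[OF wg npos] LIMSEQ_unique by metis
qed


theorem mainTheorem9: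
  fixes b :: "'v \<Rightarrow> 'v \<Rightarrow> real" and c :: "'v \<Rightarrow> real"
  assumes "countable (UNIV :: 'v set)" and "infinite (UNIV :: 'v set)"
    and "weighted_graph b c"
    and "\<forall>x. nweight b c x > 0"
    and "u \<in> form_domain b c"
  shows "(1 - sqrt (1 - (alpha b c UNIV)\<^sup>2)) * norm2 (nweight b c) u \<le> Qform b c u
       \<and> Qform b c u \<le> (1 + sqrt (1 - (alpha b c UNIV)\<^sup>2)) * norm2 (nweight b c) u"
proof -
  note wg = assms(3) and npos = assms(4)
  define s where "s = sqrt (1 - (alpha b c UNIV)^2)"
  obtain f where ap: "approx_seq b c f u"
    using assms(5) unfolding form_domain_def by blast
  have "\<bar>Qmax b c (f k) - norm2 (nweight b c) (f k)\<bar> \<le> s * norm2 (nweight b c) (f k)" for k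
  proof -
    have "fin_supp (f k)"
      using ap by (simp add: approx_seq_def)
    then show ?thesis
      unfolding s_def fin_supp_def by (rule cheeger_finite_support[OF wg npos]) simp
  qed
  moreover have "(\<lambda>k. \<bar>Qmax b c (f k) - norm2 (nweight b c) (f k)\<bar>)
      \<longlonglongrightarrow> \<bar>Qmax b c u - norm2 (nweight b c) u\<bar>"
    using approx_seq_tendsto[OF wg npos ap] by (intro tendsto_rabs tendsto_diff)
  moreover have "(\<lambda>k. s * norm2 (nweight b c) (f k)) \<longlonglongrightarrow> s * norm2 (nweight b c) u"
    using approx_seq_tendsto(2)[OF wg npos ap] by (rule tendsto_mult_left)
  ultimately have "\<bar>Qmax b c u - norm2 (nweight b c) u\<bar> \<le> s * norm2 (nweight b c) u"
    by (intro LIMSEQ_le) auto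
  then show ?thesis
    unfolding Qform_eq_Qmax[OF wg npos ap] s_def by (simp add: abs_le_iff algebra_simps)
qed

end
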